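(* Let $C_m=\frac{1}{m+1}\binom{2m}{m}$ denote the Catalan numbers, and for integers $n\ge0$ define $$E(n)=\frac{\sum_{j=0}^{\lfloor n/2\rfloor}C_{n-2j}\,C_{2j}}{\sum_{\ell=0}^{n}C_{n-\ell}\,C_{\ell}}.$$ Then (i) the sequence $m\mapsto E(2m)$, $m\ge0$, is decreasing; (ii) $E(2m+1)=\tfrac12$ for all $m\ge0$. Consequently, for all $m\ge4$, $E(m)\le\max\{E(4),\tfrac12\}=E(4)$. *)

theory Defs
  imports Complex_Main
begin

definition catalan :: "nat \<Rightarrow> real" where
  "catalan m = real (2*m choose m) / real (m + 1)"

definition E :: "nat \<Rightarrow> real" where
  "E n = (\<Sum>j=0..n div 2. catalan (n - 2*j) * catalan (2*j)) /
         (\<Sum>l=0..n. catalan (n - l) * catalan l)"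

end

theory Submission
  imports Defs "HOL-Computational_Algebra.Formal_Power_Series"
begin

text \<open>
  Write C for the generating function of the Catalan numbers and S = sqrt(1 - 4x) for the
  binomial series; comparing coefficients gives S = 1 - 2xC. Squaring yields Segner's
  recurrence sum_l C(n-l) C(l) = C(n+1), the denominator of E(n). The even part of C is
  (S(-x) - S(x)) / 4x, and S(x) S(-x) = S(4x^2) because both sides square to 1 - 16x^2
  and have constant term 1; squaring the even part therefore gives
  sum_j C(2j) C(2m-2j) = 4^m C(m). Hence E(2m) = 4^m C(m) / C(2m+1), and
  E(2m+2) / E(2m) = 4(2m+1)(2m+3) / ((4m+3)(4m+5)) < 1. For odd n the involution
  l \<mapsto> n - l of the symmetric convolution swaps even and odd l, so the numerator of E(n)
  is half the denominator.
\<close>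

lemma sum_even_indices:
  fixes n :: nat
  shows "(\<Sum>i=0..n. if even i then f i else 0) = (\<Sum>j=0..n div 2. f (2 * j))"
proof (induction n)
  case 0
  then show ?case by simp
next
  case (Suc n)
  show ?case
  proof (cases "even n")
    case True
    then have "Suc n div 2 = n div 2" by presburger
    then show ?thesis using Suc True by simp
  next
    case False
    then have "Suc n div 2 = Suc (n div 2)" "2 * Suc (n div 2) = Suc n" by presburger+
    then show ?thesis using Suc False by simp
  qed
qed

lemma sum_even_eq_sum_odd_if_symmetric:
  fixes n :: nat
  assumes "odd n" and "\<And>l. l \<le> n \<Longrightarrow> f (n - l) = f l"
  shows "(\<Sum>l=0..n. if even l then f l else 0) = (\<Sum>l=0..n. if odd l then f l else 0)"
proof -
  have "odd (n - l) \<longleftrightarrow> even l" if "l \<le> n" for l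
    using \<open>odd n\<close> that by auto
  then show ?thesis
    by (intro sum.reindex_bij_witness[where i="\<lambda>l. n - l" and j="\<lambda>l. n - l"]) (auto simp: assms)
qed

lemma catalan_fact: "catalan n = fact (2 * n) / (fact n * fact (Suc n))"
  by (simp add: catalan_def binomial_fact field_simps mult_2)

lemma catalan_pos: "catalan n > 0"
  by (simp add: catalan_def)

lemma catalan_Suc: "catalan (Suc n) = 2 * (2 * real n + 1) / real (n + 2) * catalan n"
proof -
  have "(fact (2 * Suc n) :: real) = 2 * real (n + 1) * (2 * real n + 1) * fact (2 * n)"
    by (simp add: algebra_simps)
  then show ?thesis
    unfolding catalan_fact by (simp add: divide_simps) (simp add: algebra_simps)
qed

lemma gbinomial_half_Suc_eq_catalan: "(-4) ^ Suc n * ((1/2) gchoose Suc n) = - 2 * catalan n"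
proof (induction n)
  case 0
  then show ?case by (simp add: catalan_def)
next
  case (Suc n)
  let ?g = "\<lambda>k. (1/2::real) gchoose k"
  have rec: "real (n + 2) * ?g (Suc (Suc n)) = (- 1/2 - real n) * ?g (Suc n)"
    using gbinomial_mult_1[of "1/2::real" "Suc n"] by (simp add: algebra_simps)
  have "real (n + 2) * ((-4) ^ Suc (Suc n) * ?g (Suc (Suc n)))
      = (-4) * (-4) ^ Suc n * (real (n + 2) * ?g (Suc (Suc n)))"
    by (simp add: algebra_simps)
  also have "\<dots> = 2 * (2 * real n + 1) * ((-4) ^ Suc n * ?g (Suc n))"
    unfolding rec by (simp add: algebra_simps)
  also have "\<dots> = 2 * (2 * real n + 1) * (- 2 * catalan n)"
    using Suc.IH by simp
  also have "\<dots> = real (n + 2) * (- 2 * catalan (Suc n))"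
    by (simp add: catalan_Suc)
  finally show ?case by (simp only: mult_left_cancel)
qed

unbundle fps_syntax

lemma fps_nth_compose_const_X_power:
  fixes f :: "'a::comm_ring_1 fps"
  assumes "k > 0"
  shows "(f oo (fps_const c * fps_X ^ k)) $ n = (if k dvd n then c ^ (n div k) * f $ (n div k) else 0)"
proof -
  have "(f oo (fps_const c * fps_X ^ k)) $ n = (\<Sum>i=0..n. if n = k * i then c ^ i * f $ i else 0)"
    unfolding fps_compose_nth by (intro sum.cong) (simp_all add: power_mult_distrib power_mult[symmetric])
  also have "\<dots> = (if k dvd n then c ^ (n div k) * f $ (n div k) else 0)"
  proof (cases "k dvd n")
    case True
    have "n div k \<le> n" by simp
    moreover have "n = k * i \<longleftrightarrow> i = n div k" for i
      using True assms by auto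
    ultimately show ?thesis using True by (simp add: sum.delta)
  next
    case False
    then show ?thesis by (auto intro!: sum.neutral)
  qed
  finally show ?thesis .
qed

definition catalan_fps :: "real fps" where
  "catalan_fps = Abs_fps catalan"

definition sqrt_1_minus_4X :: "real fps" where
  "sqrt_1_minus_4X = fps_binomial (1/2) oo (- 4 * fps_X)"

lemma sqrt_1_minus_4X_nth:
  "sqrt_1_minus_4X $ n = (if n = 0 then 1 else - 2 * catalan (n - 1))"
proof (cases n)
  case (Suc k)
  then show ?thesis
    using gbinomial_half_Suc_eq_catalan[of k] by (simp add: sqrt_1_minus_4X_def neg_numeral_fps_const)
qed (simp add: sqrt_1_minus_4X_def)

lemma sqrt_1_minus_4X_squared: "sqrt_1_minus_4X ^ 2 = 1 - 4 * fps_X"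
proof -
  have "fps_binomial (1/2) ^ 2 = (1 + fps_X :: real fps)"
    by (simp add: fps_binomial_power fps_binomial_1)
  then show ?thesis
    unfolding sqrt_1_minus_4X_def by (simp add: fps_compose_power fps_compose_add_distrib)
qed

lemma sqrt_1_minus_4X_eq_catalan_fps: "sqrt_1_minus_4X = 1 - 2 * fps_X * catalan_fps"
  by (rule fps_ext) (simp add: sqrt_1_minus_4X_nth catalan_fps_def numeral_fps_const mult.assoc)

lemma catalan_fps_quadratic: "fps_X * catalan_fps ^ 2 = catalan_fps - 1"
proof -
  have "(4 * fps_X) * (fps_X * catalan_fps ^ 2) = (1 - sqrt_1_minus_4X) ^ 2"
    by (simp add: sqrt_1_minus_4X_eq_catalan_fps algebra_simps power2_eq_square)
  also have "\<dots> = 2 * (1 - sqrt_1_minus_4X) - 4 * fps_X"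
    by (simp add: power2_diff sqrt_1_minus_4X_squared algebra_simps)
  also have "\<dots> = (4 * fps_X) * (catalan_fps - 1)"
    by (simp add: sqrt_1_minus_4X_eq_catalan_fps algebra_simps)
  finally show ?thesis
    by (simp only: mult_cancel_left) simp
qed

lemma catalan_convolution: "(\<Sum>l=0..n. catalan (n - l) * catalan l) = catalan (Suc n)"
proof -
  have "(catalan_fps ^ 2) $ n = catalan (Suc n)"
    using arg_cong[OF catalan_fps_quadratic, of "\<lambda>f. f $ Suc n"] by (simp add: catalan_fps_def)
  then show ?thesis
    by (simp add: power2_eq_square fps_mult_nth catalan_fps_def mult.commute)
qed

lemma sqrt_1_minus_4X_reflect_squared: "(sqrt_1_minus_4X oo - fps_X) ^ 2 = 1 + 4 * fps_X"
  by (simp add: fps_compose_power sqrt_1_minus_4X_squared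
      fps_compose_sub_distrib fps_compose_mult_distrib)

lemma sqrt_1_minus_4X_mult_reflect:
  "sqrt_1_minus_4X * (sqrt_1_minus_4X oo - fps_X) = sqrt_1_minus_4X oo (4 * fps_X ^ 2)"
    (is "?A = ?B")
proof -
  have "?A ^ 2 = 1 - 16 * fps_X ^ 2"
    unfolding power_mult_distrib sqrt_1_minus_4X_squared sqrt_1_minus_4X_reflect_squared
    by (simp add: algebra_simps power2_eq_square)
  moreover have "?B ^ 2 = 1 - 16 * fps_X ^ 2"
    by (simp add: fps_compose_power sqrt_1_minus_4X_squared
      fps_compose_sub_distrib fps_compose_mult_distrib)
  ultimately have "?A = ?B \<or> ?A = - ?B"
    using power2_eq_iff by metis
  moreover have "?A $ 0 = 1" "?B $ 0 = 1"
    by (simp_all add: sqrt_1_minus_4X_nth)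
  ultimately show ?thesis
    by (metis fps_neg_nth one_neq_neg_one)
qed

definition even_catalan_fps :: "real fps" where
  "even_catalan_fps = Abs_fps (\<lambda>n. if even n then catalan n else 0)"

lemma even_catalan_fps_eq:
  "4 * fps_X * even_catalan_fps = (sqrt_1_minus_4X oo - fps_X) - sqrt_1_minus_4X"
proof (rule fps_ext)
  fix n
  show "(4 * fps_X * even_catalan_fps) $ n = ((sqrt_1_minus_4X oo - fps_X) - sqrt_1_minus_4X) $ n"
    by (cases n) (auto simp: fps_compose_uminus' sqrt_1_minus_4X_nth even_catalan_fps_def
        numeral_fps_const mult.assoc)
qed

lemma even_catalan_fps_squared:
  "8 * fps_X ^ 2 * even_catalan_fps ^ 2 = 1 - (sqrt_1_minus_4X oo (4 * fps_X ^ 2))"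
proof -
  have "2 * (8 * fps_X ^ 2 * even_catalan_fps ^ 2) = (4 * fps_X * even_catalan_fps) ^ 2"
    by (simp add: power_mult_distrib)
  also have "\<dots> = (sqrt_1_minus_4X oo - fps_X) ^ 2 + sqrt_1_minus_4X ^ 2
      - 2 * (sqrt_1_minus_4X * (sqrt_1_minus_4X oo - fps_X))"
    unfolding even_catalan_fps_eq by (simp add: power2_diff algebra_simps)
  also have "\<dots> = 2 * (1 - (sqrt_1_minus_4X oo (4 * fps_X ^ 2)))"
    unfolding sqrt_1_minus_4X_reflect_squared sqrt_1_minus_4X_squared sqrt_1_minus_4X_mult_reflect
    by (simp add: algebra_simps)
  finally show ?thesis
    by (simp only: mult_cancel_left) simp
qed

lemma even_catalan_convolution:
  "(\<Sum>j=0..m. catalan (2 * m - 2 * j) * catalan (2 * j)) = 4 ^ m * catalan m"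
proof -
  have "4 * fps_X ^ 2 = fps_const 4 * (fps_X ^ 2 :: real fps)"
    by (simp add: numeral_fps_const)
  then have "8 * (even_catalan_fps ^ 2) $ (2 * m) = 8 * (4 ^ m * catalan m)"
    using arg_cong[OF even_catalan_fps_squared, of "\<lambda>f. f $ (2 * m + 2)"]
    by (simp add: fps_nth_compose_const_X_power sqrt_1_minus_4X_nth numeral_fps_const mult.assoc
        fps_X_power_mult_nth)
  moreover have "(even_catalan_fps ^ 2) $ (2 * m)
      = (\<Sum>i=0..2 * m. if even i then catalan i * catalan (2 * m - i) else 0)"
    unfolding power2_eq_square fps_mult_nth even_catalan_fps_def by (intro sum.cong) auto
  ultimately show ?thesis
    by (simp add: sum_even_indices mult.commute)
qed

lemma E_even: "E (2 * m) = 4 ^ m * catalan m / catalan (2 * m + 1)"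
  unfolding E_def using even_catalan_convolution[of m] catalan_convolution[of "2 * m"] by simp

lemma E_odd: "E (2 * m + 1) = 1 / 2"
proof -
  define n where "n = 2 * m + 1"
  define f where "f l = catalan (n - l) * catalan l" for l
  define N where "N = (\<Sum>l=0..n. if even l then f l else 0)"
  have "N = (\<Sum>l=0..n. if odd l then f l else 0)"
    unfolding N_def by (rule sum_even_eq_sum_odd_if_symmetric) (auto simp: n_def f_def)
  moreover have "(\<Sum>l=0..n. f l) = N + (\<Sum>l=0..n. if odd l then f l else 0)"
    unfolding N_def sum.distrib [symmetric] by (intro sum.cong) auto
  ultimately have "(\<Sum>l=0..n. f l) = 2 * N"
    by simp
  moreover have "(\<Sum>l=0..n. f l) > 0"
    unfolding f_def by (intro sum_pos) (auto simp: catalan_pos)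
  moreover have "(\<Sum>j=0..n div 2. catalan (n - 2 * j) * catalan (2 * j)) = N"
    unfolding N_def f_def by (simp add: sum_even_indices)
  ultimately show ?thesis
    unfolding E_def n_def [symmetric] f_def by simp
qed

lemma E_even_Suc_ratio:
  "E (2 * Suc m) / E (2 * m)
    = 4 * (2 * real m + 1) * (2 * real m + 3) / ((4 * real m + 3) * (4 * real m + 5))"
proof -
  have ratio: "catalan (Suc n) / catalan n = 2 * (2 * real n + 1) / (real n + 2)" for n
    using catalan_Suc [of n] catalan_pos [of n] by (simp add: add.commute)
  have "E (2 * Suc m) / E (2 * m) = 4 * (catalan (Suc m) / catalan m)
      / ((catalan (Suc (Suc (2 * m + 1))) / catalan (Suc (2 * m + 1)))
        * (catalan (Suc (2 * m + 1)) / catalan (2 * m + 1)))"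
    unfolding E_even using catalan_pos [of m] catalan_pos [of "2 * m + 1"] catalan_pos [of "2 * m + 2"]
    by (simp add: field_simps)
  also have "\<dots> = 4 * (2 * real m + 1) * (2 * real m + 3) / ((4 * real m + 3) * (4 * real m + 5))"
    unfolding ratio by (simp add: divide_simps) (simp add: algebra_simps)
  finally show ?thesis .
qed

lemma E_even_pos: "E (2 * m) > 0"
  by (simp add: E_even catalan_pos)

lemma E_even_Suc_less: "E (2 * Suc m) < E (2 * m)"
proof -
  have "4 * (2 * real m + 1) * (2 * real m + 3) < (4 * real m + 3) * (4 * real m + 5)"
    by (simp add: algebra_simps)
  then have "E (2 * Suc m) / E (2 * m) < 1"
    unfolding E_even_Suc_ratio by simp
  then show ?thesis
    using E_even_pos [of m] by simp
qed

lemma E_even_strict_antimono: "m1 < m2 \<Longrightarrow> E (2 * m2) < E (2 * m1)"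
  using lift_Suc_mono_less [of "\<lambda>m. - E (2 * m)" m1 m2] E_even_Suc_less by simp

lemma E_even_antimono: "m1 \<le> m2 \<Longrightarrow> E (2 * m2) \<le> E (2 * m1)"
  using E_even_strict_antimono [of m1 m2] by (cases "m1 = m2") simp_all

lemma E_4: "E 4 = 16 / 21"
  using E_even [of 2] by (simp add: catalan_fact fact_numeral)

theorem mainTheorem4:
  shows "(\<forall>m1 m2::nat. m1 < m2 \<longrightarrow> E (2*m2) < E (2*m1))
       \<and> (\<forall>m::nat. E (2*m+1) = 1/2)
       \<and> max (E 4) (1/2) = E 4
       \<and> (\<forall>m::nat. m \<ge> 4 \<longrightarrow> E m \<le> max (E 4) (1/2))"
proof (intro conjI allI impI)
  show "E (2 * m2) < E (2 * m1)" if "m1 < m2" for m1 m2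
    using that by (rule E_even_strict_antimono)
  show "E (2 * m + 1) = 1 / 2" for m
    by (rule E_odd)
  show max_eq: "max (E 4) (1 / 2) = E 4"
    by (simp add: E_4)
  show "E m \<le> max (E 4) (1 / 2)" if "m \<ge> 4" for m
  proof (cases "even m")
    case True
    then obtain k where "m = 2 * k" ..
    with that have "E m \<le> E (2 * 2)"
      using E_even_antimono [of 2 k] by simp
    then show ?thesis
      by (simp add: max_eq)
  next
    case False
    then obtain k where "m = 2 * k + 1"
      by (rule oddE)
    then show ?thesis
      using E_odd [of k] by simp
  qed
qed

end
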